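(* Let $n$ be an odd integer, $q=2^n$, and let $i$ be a positive integer with $\gcd(i,n)=1$. Let $d$ be an integer with $d\equiv\frac{2^i+1}{3}\pmod{2^n-1}$, i.e. $3d\equiv 2^i+1\pmod{2^n-1}$. Then for every $u\in\mathrm{GF}(q)\setminus\mathrm{GF}(2)$ the cubic equation \[\big(u^dx+(1+u)^d\big)^3+x^3+1=0\] has a unique solution $x\in\mathrm{GF}(2^n)$.
   Context: Since $n$ is odd, $\gcd(3,2^n-1)=1$, so $\frac{2^i+1}{3}$ denotes $(2^i+1)$ times the inverse of $3$ modulo $2^n-1$. *)

theory Defs
  imports "HOL-Number_Theory.Number_Theory"
begin

end

theory Submission
  imports Defs
begin

text \<open>
  Write \<open>u = r\<^sup>2\<close> and \<open>q = r\<^bsup>2\<^sup>i\<^esup>\<close>. As \<open>n\<close> is odd, cubing is a bijection of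
  \<open>GF(2\<^sup>n)\<close>, so \<open>u\<^sup>d\<close> and \<open>(1 + u)\<^sup>d\<close> are the cube roots of \<open>(r q)\<^sup>2\<close> and
  \<open>((1 + r) (1 + q))\<^sup>2\<close>. An affine change of variable \<open>x \<mapsto> w\<close> turns the equation into
  \<open>w\<^sup>3 + w = V + 1/V\<close> with \<open>V = (1 + q)\<^sup>2 r / ((1 + r)\<^sup>2 q)\<close>. Writing \<open>V = v\<^sup>3\<close> and
  \<open>s = v + 1/v\<close>, the right-hand side is \<open>s\<^sup>3 + s\<close>, and \<open>w\<^sup>3 + w + s\<^sup>3 + s\<close> is \<open>w + s\<close>
  times a quadratic whose roots would give a primitive cube root of unity, which does not
  exist since cubing is injective. So \<open>w = s\<close> is the only root. The degenerate cases
  (\<open>V \<in> {0, 1}\<close>, leading coefficient \<open>0\<close>) are excluded because \<open>r \<notin> GF(2)\<close> is fixed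
  neither by \<open>x \<mapsto> x\<^bsup>2\<^sup>i\<^esup>\<close> nor by \<open>x \<mapsto> x\<^bsup>2\<^sup>2\<^sup>i\<^esup>\<close>, as \<open>gcd(2i, n) = 1\<close>.
\<close>

lemma char2_add_eq_0_iff:
  fixes x y :: "'a::field"
  assumes "(2::'a) = 0"
  shows "x + y = 0 \<longleftrightarrow> x = y"
  by (metis assms mult_2 mult_zero_left neg_eq_iff_add_eq_0)

lemma char2_one_add_neq_zero:
  fixes x :: "'a::field"
  assumes "(2::'a) = 0" "x \<noteq> 1"
  shows "1 + x \<noteq> 0"
  using assms(2) char2_add_eq_0_iff[OF assms(1), of 1 x] by simp

lemma char2_power_two_power_add:
  fixes x y :: "'a::field"
  assumes "(2::'a) = 0"
  shows "(x + y) ^ 2 ^ k = x ^ 2 ^ k + y ^ 2 ^ k"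
proof (induction k)
  case (Suc k)
  have "(x + y) ^ 2 ^ Suc k = ((x + y) ^ 2 ^ k)\<^sup>2"
    by (simp only: power_Suc2 power_mult)
  also have "\<dots> = (x ^ 2 ^ k)\<^sup>2 + (y ^ 2 ^ k)\<^sup>2"
    using Suc assms by (simp add: power2_sum)
  finally show ?case
    by (simp only: power_Suc2 power_mult)
qed simp

lemma square_power_two_power_plus_one:
  fixes r :: "'a::comm_monoid_mult"
  shows "(r^2) ^ (2 ^ i + 1) = (r * r ^ 2 ^ i)^2"
  by (simp add: power_mult_distrib power_add mult.commute flip: power_mult)

lemma char2_one_add_square_power_two_power_plus_one:
  fixes r :: "'a::field"
  assumes char2: "(2::'a) = 0"
  shows "(1 + r^2) ^ (2 ^ i + 1) = ((1 + r) * (1 + r ^ 2 ^ i))^2"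
proof -
  have "1 + r^2 = (1 + r)^2"
    using char2 by (simp add: power2_sum)
  then show ?thesis
    using char2_power_two_power_add[OF char2, of 1 r i] square_power_two_power_plus_one[of "1 + r" i]
    by simp
qed

lemma char2_mult_ratio_sum:
  fixes x y :: "'a::field"
  assumes char2: "(2::'a) = 0" and "x \<noteq> 0" "y \<noteq> 0"
  shows "x * y * (x / y + y / x) = (x + y)^2"
proof -
  have "(x + y)^2 = x^2 + y^2"
    using char2 by (simp add: power2_sum)
  then show ?thesis
    using assms(2,3) by (simp add: field_simps power2_eq_square)
qed

lemma char2_twist_sum:
  fixes r q :: "'a::field"
  assumes char2: "(2::'a) = 0"
  shows "(1 + q)^2 * r + (1 + r)^2 * q = (r + q) * (1 + r * q)"
proof -
  have "(1 + q)^2 * r + (1 + r)^2 * q = (r + q) * (1 + r * q) + 2 * (2 * (r * q))"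
    by (simp add: algebra_simps power2_eq_square)
  then show ?thesis
    using char2 by simp
qed

lemma no_primitive_cube_root_of_unity:
  fixes t :: "'a::field"
  assumes cube_inj: "inj (\<lambda>x::'a. x ^ 3)" and "(3::'a) \<noteq> 0"
  shows "t^2 + t + 1 \<noteq> 0"
proof
  assume "t^2 + t + 1 = 0"
  moreover have "t^3 - 1 = (t - 1) * (t^2 + t + 1)"
    by (simp add: algebra_simps power2_eq_square power3_eq_cube)
  ultimately have "t^3 = 1^3"
    by simp
  then have "t = 1"
    using cube_inj by (metis (mono_tags) injD)
  with \<open>t^2 + t + 1 = 0\<close> \<open>(3::'a) \<noteq> 0\<close> show False
    by simp
qed

lemma char2_cube_plus_self_factor:
  fixes v w :: "'a::field"
  assumes char2: "(2::'a) = 0" and "v \<noteq> 0"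
  defines "s \<equiv> v + 1 / v"
  assumes "s \<noteq> 0"
  shows "w^3 + w + s^3 + s = (w + s) * (s^2 * (((w + v) / s)^2 + (w + v) / s + 1))"
proof -
  have "s * v = v^2 + 1"
    using assms(2) by (simp add: s_def field_simps power2_eq_square)
  then have "(w + v)^2 + s * (w + v) + s^2 = w^2 + s * w + s^2 + 1 + 2 * (v * w + v^2)"
    by (simp add: algebra_simps power2_eq_square)
  also have "(w + v)^2 + s * (w + v) + s^2 = s^2 * (((w + v) / s)^2 + (w + v) / s + 1)"
    using \<open>s \<noteq> 0\<close> by (simp add: field_simps power2_eq_square)
  finally have "w^2 + s * w + s^2 + 1 = s^2 * (((w + v) / s)^2 + (w + v) / s + 1)"
    using char2 by simp
  moreover have "w^3 + w + s^3 + s = (w + s) * (w^2 + s * w + s^2 + 1) - 2 * (w * s * (w + s))"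
    by (simp add: algebra_simps power2_eq_square power3_eq_cube)
  ultimately show ?thesis
    using char2 by simp
qed

lemma char2_cube_plus_self_eq_iff:
  fixes v w :: "'a::field"
  assumes char2: "(2::'a) = 0" and cube_inj: "inj (\<lambda>x::'a. x ^ 3)"
    and "v \<noteq> 0" "v \<noteq> 1"
  shows "w^3 + w = v^3 + 1 / v^3 \<longleftrightarrow> w = v + 1 / v"
proof -
  define s where "s = v + 1 / v"
  have "v^3 + 1 / v^3 = s^3 + s - 2 * (2 * s)"
    using assms(3) by (simp add: s_def field_simps power3_eq_cube)
  then have "w^3 + w = v^3 + 1 / v^3 \<longleftrightarrow> w^3 + w + s^3 + s = 0"
    using char2 char2_add_eq_0_iff[OF char2, of "w^3 + w" "s^3 + s"] by (simp add: add.assoc)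
  also have "\<dots> \<longleftrightarrow> w = s"
  proof -
    have "(v + 1)^2 \<noteq> 0"
      using char2_one_add_neq_zero[OF char2 assms(4)] by (simp add: add.commute)
    then have "s \<noteq> 0"
      using assms(3) char2 by (auto simp: s_def field_simps power2_eq_square)
    moreover have "t^2 + t + 1 \<noteq> 0" for t :: 'a
    proof (rule no_primitive_cube_root_of_unity[OF cube_inj])
      have "(3::'a) = 1 + 2"
        by simp
      then show "(3::'a) \<noteq> 0"
        using char2 by simp
    qed
    ultimately show ?thesis
      using char2_cube_plus_self_factor[OF char2 assms(3), of w, folded s_def]
        char2_add_eq_0_iff[OF char2, of w s] by auto
  qed
  finally show ?thesis
    by (simp add: s_def)
qed

lemma char2_depressed_cubic:
  fixes a b c e k t x :: "'a::field"
  assumes char2: "(2::'a) = 0" and "a \<noteq> 0" "t \<noteq> 0"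
    and quadratic_term: "a^2 * t^2 = b^2 + a * c" and constant_term: "a^2 * t^3 * k = b * c + a * e"
  defines "w \<equiv> (x + b / a) / t"
  shows "a * x^3 + b * x^2 + c * x + e = a * t^3 * (w^3 + w + k)"
proof -
  have x: "x = t * w - b / a"
    using assms(3) by (simp add: w_def)
  have "a * x^3 + b * x^2 + c * x + e
      = a * t^3 * w^3 + (b^2 / a + c) * t * w + (e - b * c / a) - 2 * (b * t^2 * w^2)"
    unfolding x using assms(2) by (simp add: field_simps power2_eq_square power3_eq_cube)
  also have "b^2 / a + c = a * t^2"
    using assms(2) quadratic_term by (simp add: field_simps power2_eq_square)
  also have "e - b * c / a = a * t^3 * k - 2 * (b * c / a)"
    using assms(2) constant_term by (simp add: field_simps power2_eq_square)
  finally show ?thesis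
    using char2 by (simp add: algebra_simps power2_eq_square power3_eq_cube)
qed

lemma char2_cubic_unique_root:
  fixes a b c e t v :: "'a::field"
  assumes char2: "(2::'a) = 0" and cube_inj: "inj (\<lambda>x::'a. x ^ 3)"
    and "a \<noteq> 0" "t \<noteq> 0" "a^2 * t^2 = b^2 + a * c"
    and "a^2 * t^3 * (v^3 + 1 / v^3) = b * c + a * e"
    and "v \<noteq> 0" "v \<noteq> 1"
  shows "\<exists>!x. a * x^3 + b * x^2 + c * x + e = 0"
proof -
  define w where "w x = (x + b / a) / t" for x
  have "a * x^3 + b * x^2 + c * x + e = 0 \<longleftrightarrow> w x = v + 1 / v" for x
  proof -
    have "a * x^3 + b * x^2 + c * x + e = a * t^3 * (w x ^ 3 + w x + (v^3 + 1 / v^3))"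
      unfolding w_def by (rule char2_depressed_cubic[OF char2 assms(3-6)])
    also have "\<dots> = 0 \<longleftrightarrow> w x ^ 3 + w x = v^3 + 1 / v^3"
      using assms(3,4) char2_add_eq_0_iff[OF char2, of "w x ^ 3 + w x"] by (simp add: add.assoc)
    also have "\<dots> \<longleftrightarrow> w x = v + 1 / v"
      by (rule char2_cube_plus_self_eq_iff[OF char2 cube_inj assms(7,8)])
    finally show ?thesis .
  qed
  moreover have "w x = v + 1 / v \<longleftrightarrow> x = t * (v + 1 / v) - b / a" for x
    using assms(4) by (auto simp: w_def field_simps)
  ultimately show ?thesis
    by auto
qed

lemma char2_binomial_cube_expand:
  fixes a b x :: "'a::field"
  assumes char2: "(2::'a) = 0"
  shows "(a * x + b)^3 + x^3 + 1 = (a^3 + 1) * x^3 + (a^2 * b) * x^2 + (a * b^2) * x + (b^3 + 1)"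
proof -
  have "(a * x + b)^3 + x^3 + 1
      = (a^3 + 1) * x^3 + (a^2 * b) * x^2 + (a * b^2) * x + (b^3 + 1) + 2 * (a^2 * b * x^2 + a * b^2 * x)"
    by (simp add: algebra_simps power2_eq_square power3_eq_cube)
  then show ?thesis
    using char2 by simp
qed

lemma char2_binomial_cubic_unique_solution:
  fixes a b d v :: "'a::field"
  assumes char2: "(2::'a) = 0" and cube_inj: "inj (\<lambda>x::'a. x ^ 3)"
    and a0: "a \<noteq> 0" and b0: "b \<noteq> 0" and d: "d^2 = a^3" and A1: "a^3 + 1 \<noteq> 0"
    and "v \<noteq> 0" "v \<noteq> 1"
    and constant_term: "b^3 * d * (v^3 + 1 / v^3) = (a^3 + 1) * (a^3 + b^3 + 1)"
  shows "\<exists>!x. (a * x + b)^3 + x^3 + 1 = 0"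
proof -
  define A where "A = a^3"
  define B where "B = b^3"
  have A0: "A \<noteq> 0" and d0: "d \<noteq> 0"
    using a0 d by (auto simp: A_def)
  \<comment> \<open>\<open>d / a\<close> is a square root of \<open>a\<close>; this scaling makes the linear coefficient of the depressed cubic 1\<close>
  define t where "t = b * d / (a * (A + 1))"
  have "t \<noteq> 0"
    using a0 b0 d0 A1 by (simp add: t_def A_def)
  moreover have "(A + 1)^2 * t^2 = (a^2 * b)^2 + (A + 1) * (a * b^2)"
  proof -
    have "(A + 1)^2 * t^2 = b^2 * A / a^2"
      using A1 by (simp add: t_def A_def d[symmetric] power_divide power_mult_distrib)
    also have "\<dots> = a * b^2"
      using a0 by (simp add: A_def power2_eq_square power3_eq_cube)
    also have "\<dots> = (a^2 * b)^2 + (A + 1) * (a * b^2) - 2 * (a * b^2 * A)"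
      by (simp add: A_def algebra_simps power2_eq_square power3_eq_cube)
    finally show ?thesis
      using char2 by simp
  qed
  moreover have "(A + 1)^2 * t^3 * (v^3 + 1 / v^3) = (a^2 * b) * (a * b^2) + (A + 1) * (B + 1)"
  proof -
    have "(A + 1)^2 * t^3 = b^3 * (d^2 * d) / (a^3 * (A + 1))"
      using A1 by (simp add: t_def power_divide power_mult_distrib power2_eq_square power3_eq_cube mult_ac)
    also have "\<dots> = B * d / (A + 1)"
      using A0 by (simp add: d A_def[symmetric] B_def[symmetric])
    finally have "(A + 1)^2 * t^3 * (v^3 + 1 / v^3) = B * d * (v^3 + 1 / v^3) / (A + 1)"
      by simp
    also have "\<dots> = A + B + 1"
      using A1 constant_term by (simp add: A_def B_def)
    also have "\<dots> = (a^2 * b) * (a * b^2) + (A + 1) * (B + 1) - 2 * (A * B)"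
      by (simp add: A_def B_def algebra_simps power2_eq_square power3_eq_cube)
    finally show ?thesis
      using char2 by simp
  qed
  ultimately show ?thesis
    unfolding char2_binomial_cube_expand[OF char2]
    using char2_cubic_unique_root[OF char2 cube_inj] A1 a0 assms(7,8) by (simp add: A_def B_def)
qed

lemma char2_twisted_constant_eq:
  fixes r q :: "'a::field"
  assumes char2: "(2::'a) = 0" and "r \<noteq> 0" "r \<noteq> 1" "q \<noteq> 0" "q \<noteq> 1"
  defines "X \<equiv> (1 + q)^2 * r" and "Y \<equiv> (1 + r)^2 * q"
  shows "((1 + r) * (1 + q))^2 * (r * q) * (X / Y + Y / X)
    = ((r * q)^2 + 1) * ((r * q)^2 + ((1 + r) * (1 + q))^2 + 1)"
proof -
  have "(r * q)^2 + ((1 + r) * (1 + q))^2 + 1 = (r * q + (1 + r) * (1 + q) + 1)^2"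
    using char2 by (simp add: power2_sum)
  also have "r * q + (1 + r) * (1 + q) + 1 = r + q"
    using char2 by (simp add: algebra_simps)
  finally have "((r * q)^2 + 1) * ((r * q)^2 + ((1 + r) * (1 + q))^2 + 1) = ((r + q) * (1 + r * q))^2"
    using char2 by (simp add: power2_sum power_mult_distrib)
  also have "(r + q) * (1 + r * q) = X + Y"
    unfolding X_def Y_def by (rule char2_twist_sum[OF char2, symmetric])
  also have "(X + Y)^2 = X * Y * (X / Y + Y / X)"
    using assms(2-5) char2_one_add_neq_zero[OF char2]
    by (simp add: X_def Y_def char2_mult_ratio_sum[OF char2])
  also have "X * Y = ((1 + r) * (1 + q))^2 * (r * q)"
    unfolding X_def Y_def by (simp add: algebra_simps power2_eq_square)
  finally show ?thesis ..
qed

lemma char2_twisted_cubic_unique_solution: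
  fixes a b r q :: "'a::field"
  assumes char2: "(2::'a) = 0" and cube_bij: "bij (\<lambda>x::'a. x ^ 3)"
    and r: "r \<noteq> 0" "r \<noteq> 1" and q: "q \<noteq> 0" "q \<noteq> 1" and "r * q \<noteq> 1" "r \<noteq> q"
    and a: "a^3 = (r * q)^2" and b: "b^3 = ((1 + r) * (1 + q))^2"
  shows "\<exists>!x. (a * x + b)^3 + x^3 + 1 = 0"
proof -
  define X where "X = (1 + q)^2 * r"
  define Y where "Y = (1 + r)^2 * q"
  have X0: "X \<noteq> 0" and Y0: "Y \<noteq> 0"
    using r q char2_one_add_neq_zero[OF char2] by (simp_all add: X_def Y_def)
  have "X \<noteq> Y"
  proof
    assume "X = Y"
    then have "(r + q) * (1 + r * q) = 0"
      using char2_add_eq_0_iff[OF char2, of X Y] unfolding X_def Y_def char2_twist_sum[OF char2] by blast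
    then show False
      using \<open>r \<noteq> q\<close> char2_one_add_neq_zero[OF char2 \<open>r * q \<noteq> 1\<close>]
        char2_add_eq_0_iff[OF char2, of r q] by simp
  qed
  obtain v where v: "v^3 = X / Y"
    using bij_is_surj[OF cube_bij] by (metis surjD)
  have "v \<noteq> 0" "v \<noteq> 1"
    using v X0 Y0 \<open>X \<noteq> Y\<close> by auto
  moreover have "a \<noteq> 0" "b \<noteq> 0"
    using a b r q char2_one_add_neq_zero[OF char2] by auto
  moreover have "a^3 + 1 \<noteq> 0"
  proof -
    have "a^3 + 1 = (1 + r * q)^2"
      using a char2 by (simp add: power2_sum add.commute)
    then show ?thesis
      using char2_one_add_neq_zero[OF char2 \<open>r * q \<noteq> 1\<close>] by simp
  qed
  moreover have "b^3 * (r * q) * (v^3 + 1 / v^3) = (a^3 + 1) * (a^3 + b^3 + 1)"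
    using char2_twisted_constant_eq[OF char2 r q] X0 Y0 by (simp add: a b v X_def Y_def)
  ultimately show ?thesis
    using char2_binomial_cubic_unique_solution[OF char2 bij_is_inj[OF cube_bij], of a b "r * q" v] a
    by simp
qed

lemma power_card_minus_one_eq_one:
  fixes x :: "'a::{field,finite}"
  assumes "x \<noteq> 0"
  shows "x ^ (card (UNIV :: 'a set) - 1) = 1"
proof -
  have "(\<Prod>y\<in>UNIV - {0}. x * y) = x ^ (card (UNIV :: 'a set) - 1) * \<Prod>(UNIV - {0::'a})"
    by (simp add: prod.distrib card_Diff_singleton)
  moreover have "(\<Prod>y\<in>UNIV - {0}. x * y) = \<Prod>(UNIV - {0::'a})"
    by (rule prod.reindex_bij_witness[of _ "\<lambda>y. y / x" "\<lambda>y. x * y"]) (use assms in auto)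
  moreover have "\<Prod>(UNIV - {0::'a}) \<noteq> 0"
    by simp
  ultimately show ?thesis
    by simp
qed

lemma power_card_eq_self:
  fixes x :: "'a::{field,finite}"
  shows "x ^ card (UNIV :: 'a set) = x"
proof (cases "x = 0")
  case False
  have "card (UNIV :: 'a set) = Suc (card (UNIV :: 'a set) - 1)"
    using finite_UNIV_card_ge_0[where ?'a = 'a] by simp
  then show ?thesis
    by (metis False power_Suc power_card_minus_one_eq_one mult_1_right)
qed (simp add: finite_UNIV_card_ge_0)

lemma power_card_power_eq_self:
  fixes x :: "'a::{field,finite}"
  shows "x ^ (card (UNIV :: 'a set) ^ m) = x"
  by (induction m) (simp_all add: power_card_eq_self power_mult)

lemma two_eq_zero_if_card_power_two:
  assumes "card (UNIV :: 'a::{field,finite} set) = 2 ^ n" "n > 0"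
  shows "(2::'a) = 0"
proof -
  have "odd (2 ^ n - 1 :: nat)"
    using assms(2) by simp
  then have "(-1::'a) = 1"
    using power_card_minus_one_eq_one[of "-1::'a"] assms(1) by simp
  then have "(2::'a) = 1 - (-1)"
    by simp
  then show ?thesis
    by (simp add: \<open>-1 = 1\<close>)
qed

lemma square_root_if_card_power_two:
  fixes x :: "'a::{field,finite}"
  assumes "card (UNIV :: 'a set) = 2 ^ n" "n > 0"
  shows "(x ^ 2 ^ (n - 1))^2 = x"
proof -
  have "(x ^ 2 ^ (n - 1))^2 = x ^ 2 ^ n"
    using assms(2) by (simp flip: power_mult power_Suc2)
  then show ?thesis
    using power_card_eq_self[of x] assms(1) by simp
qed

lemma frobenius_fixed_point:
  fixes x :: "'a::{field,finite}"
  assumes "card (UNIV :: 'a set) = 2 ^ n" "n > 0" "coprime j n" "x ^ 2 ^ j = x"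
  shows "x = 0 \<or> x = 1"
proof -
  have "gcd n j = 1"
    using assms(3) by (metis coprime_iff_gcd_eq_1 gcd.commute)
  then obtain k m where km: "n * k = j * m + 1"
    using bezout_nat[of n j] assms(2) by auto
  have iterate: "x ^ (2 ^ j) ^ l = x" for l
    by (induction l) (simp_all add: power_mult assms(4))
  have "card (UNIV :: 'a set) ^ k = (2 ^ j) ^ m * 2"
    by (simp add: assms(1) km flip: power_mult)
  then have "(x ^ (2 ^ j) ^ m)^2 = x"
    using power_card_power_eq_self[of x k] by (simp add: power_mult)
  then have "x^2 = x"
    by (simp add: iterate)
  then have "x * (x - 1) = 0"
    by (simp add: right_diff_distrib power2_eq_square)
  then show ?thesis
    by simp
qed

lemma frobenius_twist_nondegenerate:
  fixes r :: "'a::{field,finite}"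
  assumes card: "card (UNIV :: 'a set) = 2 ^ n" and "odd n" "coprime i n" and r: "r \<noteq> 0" "r \<noteq> 1"
  defines "q \<equiv> r ^ 2 ^ i"
  shows "q \<noteq> 0" "q \<noteq> 1" "r * q \<noteq> 1" "r \<noteq> q"
proof -
  have n0: "n > 0"
    using \<open>odd n\<close> by (cases n) auto
  have char2: "(2::'a) = 0"
    using two_eq_zero_if_card_power_two[OF card n0] .
  show "q \<noteq> 0"
    using r by (simp add: q_def)
  show "q \<noteq> 1"
  proof
    assume "q = 1"
    then have "(r + 1) ^ 2 ^ i = 0"
      using char2 by (simp add: q_def char2_power_two_power_add)
    with r show False
      using char2_add_eq_0_iff[OF char2, of r 1] by simp
  qed
  show "r \<noteq> q"
    using frobenius_fixed_point[OF card n0 \<open>coprime i n\<close>, of r] r by (auto simp: q_def)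
  show "r * q \<noteq> 1"
  proof
    assume "r * q = 1"
    then have "q = inverse r"
      using r by (simp add: field_simps)
    then have "r ^ 2 ^ (2 * i) = r"
      using r by (simp add: q_def power_add mult_2 power_mult power_inverse)
    moreover have "coprime (2 * i) n"
      using \<open>odd n\<close> \<open>coprime i n\<close> by simp
    ultimately show False
      using frobenius_fixed_point[OF card n0] r by blast
  qed
qed

lemma cube_bij_if_card_odd_power_two:
  assumes "card (UNIV :: 'a::{field,finite} set) = 2 ^ n" "odd n"
  shows "bij (\<lambda>x::'a. x ^ 3)"
proof -
  obtain m where "n + 1 = 2 * m"
    using \<open>odd n\<close> by (metis odd_even_add odd_one evenE)
  moreover have "[(4::nat) ^ m = 1 ^ m] (mod 3)"
    by (rule cong_pow) (simp add: cong_def)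
  ultimately have "[(2::nat) ^ (n + 1) = 1] (mod 3)"
    by (simp add: power_mult)
  then have "3 dvd (2::nat) ^ (n + 1) - 1"
    by (rule cong_to_1_nat)
  then obtain e where e: "(2::nat) ^ (n + 1) - 1 = 3 * e"
    by blast
  have "(x ^ e) ^ 3 = x" for x :: 'a
  proof (cases "x = 0")
    case False
    have "(2::nat) ^ (n + 1) - 1 = 2 ^ n + (2 ^ n - 1)"
      by simp
    then have "(x ^ e) ^ 3 = x ^ 2 ^ n * x ^ (2 ^ n - 1)"
      by (metis e power_add power_mult mult.commute)
    then show ?thesis
      using power_card_minus_one_eq_one[OF False] power_card_eq_self[of x] assms(1) by simp
  qed (use e one_less_power[of "2::nat" "n + 1"] in \<open>cases e; simp\<close>)
  then have "surj (\<lambda>x::'a. x ^ 3)"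
    by (metis surjI)
  then show ?thesis
    by (simp add: bij_def finite_UNIV_surj_inj)
qed

lemma power_int_cong:
  fixes x :: "'a::field"
  assumes "x \<noteq> 0" "x ^ N = 1" "[k = l] (mod int N)"
  shows "x powi k = x powi l"
proof -
  obtain m where "l = k + int N * m"
    using assms(3) cong_iff_lin by blast
  then show ?thesis
    using assms(1,2) by (simp add: power_int_add power_int_mult)
qed

lemma power_int_cube_if_cong:
  fixes x :: "'a::{field,finite}"
  assumes "card (UNIV :: 'a set) = 2 ^ n" "x \<noteq> 0" "[3 * d = int e] (mod (2 ^ n - 1))"
  shows "(x powi d)^3 = x ^ e"
proof -
  have "[3 * d = int e] (mod int (card (UNIV :: 'a set) - 1))"
    using assms(1,3) by (simp add: of_nat_diff)
  then have "x powi (3 * d) = x powi int e"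
    by (rule power_int_cong[OF assms(2) power_card_minus_one_eq_one[OF assms(2)]])
  moreover have "x powi (3 * d) = (x powi d)^3"
    by (simp add: power_int_mult mult.commute)
  ultimately show ?thesis
    by simp
qed

theorem lemma15:
  fixes u :: "'a::{field,finite}" and n i :: nat and d :: int
  assumes "card (UNIV :: 'a set) = 2 ^ n"
    and "odd n"
    and "i > 0"
    and "coprime i n"
    and "[3 * d = 2 ^ i + 1] (mod (2 ^ n - 1))"
    and "u \<notin> {0, 1}"
  shows "\<exists>!x::'a. (u powi d * x + (1 + u) powi d) ^ 3 + x ^ 3 + 1 = 0"
proof -
  have n0: "n > 0"
    using \<open>odd n\<close> by (cases n) auto
  have char2: "(2::'a) = 0"
    using two_eq_zero_if_card_power_two[OF assms(1) n0] .
  have cong: "[3 * d = int (2 ^ i + 1)] (mod (2 ^ n - 1))"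
    using assms(5) by (simp add: add.commute)
  define r where "r = u ^ 2 ^ (n - 1)"
  have u: "u = r^2"
    using square_root_if_card_power_two[OF assms(1) n0] by (simp add: r_def)
  have r: "r \<noteq> 0" "r \<noteq> 1"
    using assms(6) by (auto simp: u)
  have u0: "u \<noteq> 0" and u1: "1 + u \<noteq> 0"
    using assms(6) char2_one_add_neq_zero[OF char2, of u] by auto
  have "(u powi d)^3 = u ^ (2 ^ i + 1)"
    by (rule power_int_cube_if_cong[OF assms(1) u0 cong])
  then have "(u powi d)^3 = (r * r ^ 2 ^ i)^2"
    by (simp only: u square_power_two_power_plus_one)
  moreover have "((1 + u) powi d)^3 = (1 + u) ^ (2 ^ i + 1)"
    by (rule power_int_cube_if_cong[OF assms(1) u1 cong])
  then have "((1 + u) powi d)^3 = ((1 + r) * (1 + r ^ 2 ^ i))^2"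
    by (simp only: u char2_one_add_square_power_two_power_plus_one[OF char2])
  ultimately show ?thesis
    by (rule char2_twisted_cubic_unique_solution[OF char2 cube_bij_if_card_odd_power_two[OF assms(1,2)]
          r frobenius_twist_nondegenerate[OF assms(1,2,4) r]])
qed

end
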